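(* Let $L_\alpha(x,t)=\partial/\partial x^\alpha-\hbar^{-1}C_\alpha(x,t)$, $\alpha=1,\dots,n$, be pairwise commuting for each $t$ and satisfy, for a fixed $b\in Diag[\hbar^{-1}]$, $$\frac{\partial L_\alpha}{\partial t}=[\varphi(b)_{\le-1},L_\alpha]\quad(\alpha=1,\dots,n).$$ Let $T(x,t)$ be a dressing transformation depending smoothly on $t$, with $T^{-1}L_\alpha T=\partial/\partial x^\alpha+\sum_{k\ge-1}\hbar^kh_{k,\alpha}(x,t)$, $h_{k,\alpha}(x,t)\in Diag$. Then for each $k$ there is a diagonal-matrix-valued function $B_k(x,t)$, independent of $\alpha$, such that $$\frac{\partial h_{k,\alpha}}{\partial t}+\frac{\partial B_k}{\partial x^\alpha}=0\quad\text{for all }\alpha.$$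
   Context: $C_\alpha$ are $Mat(n,\mathbb C)$-valued analytic functions of $x$ in a domain of $\mathbb C^n$ and of $t$; $Diag$: diagonal matrices; $Diag[\hbar^{-1}]$: polynomials in $\hbar^{-1}$ with constant diagonal coefficients. A dressing transformation is an invertible $T\in Mat(n,\mathbb C)[[\hbar]]$ with $T^{-1}L_\alpha T=\partial/\partial x^\alpha+h_\alpha$, $h_\alpha\in\hbar^{-1}Diag[[\hbar]]$ for all $\alpha$; it is assumed to exist and is assumed that the leading terms $h_{-1,\alpha}$, $\alpha=1,\dots,n$, span $Diag$ (as in the semisimple Frobenius setting). $\varphi(b)=TbT^{-1}$. For a Laurent series $v=\sum_lv_l\hbar^l$, $v_{\le k}=\sum_{l\le k}v_l\hbar^l$. Conjugation $T^{-1}(\partial+A)T=\partial+T^{-1}\partial T+T^{-1}AT$; $[\partial+A,M]=\partial M+[A,M]$. *)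

theory Defs
  imports "HOL-Analysis.Analysis"
begin

text \<open>Matrix-valued coefficient functions of (x,t), x in complex^n, t complex;
  formal Laurent series in hbar are represented by their coefficient maps int => coefficient.\<close>

type_synonym 'n mfun = "complex^'n \<Rightarrow> complex \<Rightarrow> complex^'n^'n"
type_synonym 'n ser = "int \<Rightarrow> 'n mfun"

definition diag_mat :: "complex^'n^'n \<Rightarrow> bool" where
  "diag_mat M \<longleftrightarrow> (\<forall>i j. i \<noteq> j \<longrightarrow> M$i$j = 0)"

definition cscale :: "complex \<Rightarrow> complex^'n^'n \<Rightarrow> complex^'n^'n" where
  "cscale c M = (\<chi> i j. c * M$i$j)"

definition upd :: "complex^'n \<Rightarrow> 'n \<Rightarrow> complex \<Rightarrow> complex^'n" where
  "upd x a s = (\<chi> k. if k = a then s else x$k)"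

text \<open>Holomorphy in several complex variables (Osgood): continuous and holomorphic in each
  variable separately.\<close>
definition holo_on :: "((complex^'n) \<times> complex) set \<Rightarrow> (complex^'n \<Rightarrow> complex \<Rightarrow> complex) \<Rightarrow> bool" where
  "holo_on \<Omega> g \<longleftrightarrow> continuous_on \<Omega> (\<lambda>p. g (fst p) (snd p)) \<and>
     (\<forall>x t. (x,t) \<in> \<Omega> \<longrightarrow>
        (\<forall>a. (\<lambda>s. g (upd x a s) t) field_differentiable (at (x$a))) \<and>
        (\<lambda>s. g x s) field_differentiable (at t))"

definition mholo_on :: "((complex^'n) \<times> complex) set \<Rightarrow> 'n mfun \<Rightarrow> bool" where
  "mholo_on \<Omega> f \<longleftrightarrow> (\<forall>i j. holo_on \<Omega> (\<lambda>x t. f x t $ i $ j))"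

definition px :: "'n::finite \<Rightarrow> 'n mfun \<Rightarrow> 'n mfun" where
  "px a f x t = (\<chi> i j. deriv (\<lambda>s. f (upd x a s) t $ i $ j) (x$a))"

definition pt :: "('n::finite) mfun \<Rightarrow> 'n mfun" where
  "pt f x t = (\<chi> i j. deriv (\<lambda>s. f x s $ i $ j) t)"

definition spx :: "'n::finite \<Rightarrow> 'n ser \<Rightarrow> 'n ser" where
  "spx a A k = px a (A k)"

definition spt :: "('n::finite) ser \<Rightarrow> 'n ser" where
  "spt A k = pt (A k)"

text \<open>Product of Laurent series (Cauchy product; finite for series bounded below).\<close>
definition smult :: "('n::finite) ser \<Rightarrow> 'n ser \<Rightarrow> 'n ser" where
  "smult A B k x t =
     (\<Sum>i\<in>{i. A i \<noteq> (\<lambda>_ _. 0) \<and> B (k - i) \<noteq> (\<lambda>_ _. 0)}. A i x t ** B (k - i) x t)"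

definition sone :: "('n::finite) ser" where
  "sone k = (if k = 0 then (\<lambda>_ _. mat 1) else (\<lambda>_ _. 0))"

definition scomm :: "('n::finite) ser \<Rightarrow> 'n ser \<Rightarrow> 'n ser" where
  "scomm A B k x t = smult A B k x t - smult B A k x t"

text \<open>Commutator of the operators d/dx^a + A and d/dx^c + B, as a multiplication operator:
  d_a B - d_c A + [A,B].\<close>
definition conn_comm :: "'n::finite \<Rightarrow> 'n ser \<Rightarrow> 'n \<Rightarrow> 'n ser \<Rightarrow> 'n ser" where
  "conn_comm a A c B k x t = spx a B k x t - spx c A k x t + scomm A B k x t"

end

theory Submission
  imports Defs "HOL-Complex_Analysis.Cauchy_Integral_Formula" "HOL-Library.Function_Algebras"
begin

text \<open>
  Let P = phi(b)_{<=-1} and M = T^{-1} (d_t T - P T). Conjugation by T turns the operators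
  d_a + A_a (with A_a = -hbar^{-1} C_a) and d_t - P into d_a + h_a and d_t + M, and it conjugates
  their commutator along. The Lax equation says that the first pair commutes, hence
  d_t h_a = d_a M + [h_a, M]. Off the diagonal, in the lowest degree where M fails to be
  diagonal, only [h_{-1,a}, M] survives; since the h_{-1,a} span the diagonal matrices, M is
  diagonal. Then [h_a, M] = 0 and B_k = -M_k. Conjugation needs d_t d_a T = d_a d_t T, which holds
  because mixed partial derivatives of continuous, separately holomorphic functions commute
  (Cauchy's integral formula).
\<close>

section \<open>Mixed partial derivatives of separately holomorphic functions\<close>

definition circle_deriv_integrand ::
    "(complex \<Rightarrow> complex) \<Rightarrow> complex \<Rightarrow> real \<Rightarrow> complex \<Rightarrow> real \<Rightarrow> complex" where
  "circle_deriv_integrand f c R w u =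
     f (circlepath c R u) * vector_derivative (circlepath c R) (at u) / (circlepath c R u - w)^2"

lemma deriv_eq_circle_integral:
  assumes "continuous_on (cball c R) f" "f holomorphic_on ball c R" "w \<in> ball c R"
  shows "deriv f w = integral {0..1} (circle_deriv_integrand f c R w) / (2 * pi * \<i>)"
proof -
  have "((\<lambda>u. f u / (u - w) ^ Suc 1) has_contour_integral 2 * pi * \<i> / fact 1 * (deriv ^^ 1) f w)
          (circlepath c R)"
    by (rule Cauchy_has_contour_integral_higher_derivative_circlepath[OF assms])
  then have "contour_integral (circlepath c R) (\<lambda>u. f u / (u - w)^2) = 2 * pi * \<i> * deriv f w"
    using contour_integral_unique by (simp add: numeral_2_eq_2)
  then show ?thesis
    by (simp add: contour_integral_integral circle_deriv_integrand_def[abs_def])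
qed

lemma dist_circlepath_centre: "0 \<le> R \<Longrightarrow> dist (circlepath c R u) c = R"
  by (simp add: circlepath dist_norm norm_mult)

lemma continuous_on_circlepath_compose [continuous_intros]:
  "continuous_on S f \<Longrightarrow> continuous_on S (\<lambda>x. circlepath c R (f x))"
  by (simp add: circlepath continuous_intros)

lemma continuous_on_circle_deriv_integrand:
  assumes cont: "continuous_on (P \<times> sphere c R) (\<lambda>(q, z). G q z)"
    and W: "W \<subseteq> ball c R"
  shows "continuous_on ((P \<times> W) \<times> {0..1})
           (\<lambda>((q, w), u). circle_deriv_integrand (G q) c R w u)"
proof (cases "W = {}")
  case False
  then obtain w where "w \<in> W" by blast
  then have "dist c w < R" using W by auto
  then have R: "0 < R" using zero_le_dist[of c w] by linarith
  have on_circle: "dist c (circlepath c R u) = R" for u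
    using dist_circlepath_centre[of R c u] R by (simp add: dist_commute)
  have G: "continuous_on ((P \<times> W) \<times> {0..1}) (\<lambda>x. G (fst (fst x)) (circlepath c R (snd x)))"
    by (rule continuous_on_compose2[OF cont, where f="\<lambda>x. (fst (fst x), circlepath c R (snd x))", simplified])
       (auto simp: on_circle intro!: continuous_intros)
  have "circlepath c R u \<noteq> w" if "w \<in> W" for u w
    using on_circle[of u] W that by auto
  then have "continuous_on ((P \<times> W) \<times> {0..1})
      (\<lambda>x. G (fst (fst x)) (circlepath c R (snd x)) * (2 * pi * \<i> * R * exp (2 * of_real pi * \<i> * of_real (snd x))) /
            (circlepath c R (snd x) - snd (fst x))^2)"
    by (intro continuous_on_divide continuous_on_mult[OF G]) (auto intro!: continuous_intros)
  then show ?thesis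
    by (simp add: circle_deriv_integrand_def vector_derivative_circlepath case_prod_beta)
qed simp

lemma continuous_on_deriv_param:
  fixes G :: "'p::topological_space \<Rightarrow> complex \<Rightarrow> complex"
  assumes cont: "continuous_on (P \<times> cball c R) (\<lambda>(q, z). G q z)"
    and holo: "\<And>q. q \<in> P \<Longrightarrow> G q holomorphic_on ball c R"
  shows "continuous_on (P \<times> ball c R) (\<lambda>(q, w). deriv (G q) w)"
proof -
  have "continuous_on (P \<times> sphere c R) (\<lambda>(q, z). G q z)"
    by (rule continuous_on_subset[OF cont]) auto
  from continuous_on_circle_deriv_integrand[OF this subset_refl]
  have "continuous_on (P \<times> ball c R)
          (\<lambda>qw. integral (cbox 0 1) (circle_deriv_integrand (G (fst qw)) c R (snd qw)))"
    by (intro integral_continuous_on_param) (simp add: split_def cbox_interval)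
  then have cont_integral: "continuous_on (P \<times> ball c R)
          (\<lambda>(q, w). integral (cbox 0 1) (circle_deriv_integrand (G q) c R w) / (2 * pi * \<i>))"
    by (simp add: split_def continuous_intros)
  have Cauchy: "deriv (G q) w = integral (cbox 0 1) (circle_deriv_integrand (G q) c R w) / (2 * pi * \<i>)"
    if "q \<in> P" "w \<in> ball c R" for q w
  proof (rule deriv_eq_circle_integral[OF _ holo[OF that(1)] that(2), unfolded cbox_interval[symmetric]])
    show "continuous_on (cball c R) (G q)"
      by (rule continuous_on_compose2[OF cont, where f="\<lambda>z. (q, z)", simplified])
         (auto intro!: continuous_intros simp: that)
  qed
  show ?thesis
    by (rule continuous_on_eq[OF cont_integral]) (auto simp: Cauchy)
qed

lemma has_field_derivative_circle_integral_param:
  fixes G G' :: "complex \<Rightarrow> complex \<Rightarrow> complex"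
  assumes "open D" "convex D" "z0 \<in> D" "w \<in> ball c r"
    and G': "\<And>z \<sigma>. z \<in> D \<Longrightarrow> \<sigma> \<in> sphere c r \<Longrightarrow> ((\<lambda>z. G z \<sigma>) has_field_derivative G' z \<sigma>) (at z)"
    and cont_G: "continuous_on (D \<times> sphere c r) (\<lambda>(z, \<sigma>). G z \<sigma>)"
    and cont_G': "continuous_on (D \<times> sphere c r) (\<lambda>(z, \<sigma>). G' z \<sigma>)"
  shows "((\<lambda>z. integral {0..1} (circle_deriv_integrand (G z) c r w)) has_field_derivative
           integral {0..1} (circle_deriv_integrand (G' z0) c r w)) (at z0)"
proof -
  have "dist c w < r"
    using \<open>w \<in> ball c r\<close> by simp
  then have "0 < r"
    using zero_le_dist[of c w] by linarith
  have cont_integrand: "continuous_on (D \<times> {0..1}) (\<lambda>(z, u). circle_deriv_integrand (K z) c r w u)"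
    if "continuous_on (D \<times> sphere c r) (\<lambda>(z, \<sigma>). K z \<sigma>)" for K
  proof -
    have "continuous_on (D \<times> {0..1}) (\<lambda>x. ((fst x, w), snd x))"
      "(\<lambda>x. ((fst x, w), snd x)) ` (D \<times> {0..1}) \<subseteq> (D \<times> {w}) \<times> {0..1}"
      by (auto intro!: continuous_intros)
    from continuous_on_compose2[OF continuous_on_circle_deriv_integrand[OF that] this]
    show ?thesis
      using \<open>w \<in> ball c r\<close> by (simp add: split_def)
  qed
  have "((\<lambda>z. integral (cbox 0 1) (circle_deriv_integrand (G z) c r w)) has_field_derivative
          integral (cbox 0 1) (circle_deriv_integrand (G' z0) c r w)) (at z0 within D)"
  proof (rule leibniz_rule_field_derivative[OF _ _ cont_integrand[OF cont_G', folded cbox_interval]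
                                              assms(3,2)])
    fix z u assume "z \<in> D"
    have "circlepath c r u \<in> sphere c r"
      using dist_circlepath_centre[of r c u] \<open>0 < r\<close> by (simp add: dist_commute)
    from has_field_derivative_at_within[OF G'[OF \<open>z \<in> D\<close> this]]
    show "((\<lambda>z. circle_deriv_integrand (G z) c r w u) has_field_derivative
            circle_deriv_integrand (G' z) c r w u) (at z within D)"
      unfolding circle_deriv_integrand_def by (intro DERIV_cdivide DERIV_cmult_right)
  next
    fix z assume "z \<in> D"
    have "continuous_on {0..1} (\<lambda>u. (z, u))" "(\<lambda>u. (z, u)) ` {0..1} \<subseteq> D \<times> {0..1}"
      using \<open>z \<in> D\<close> by (auto intro!: continuous_intros)
    from continuous_on_compose2[OF cont_integrand[OF cont_G] this]
    show "circle_deriv_integrand (G z) c r w integrable_on cbox 0 1"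
      by (simp add: cbox_interval integrable_continuous_real)
  qed
  then show ?thesis
    by (simp add: at_within_open[OF assms(3,1)] cbox_interval)
qed

lemma has_field_derivative_deriv_param:
  fixes F :: "complex \<Rightarrow> complex \<Rightarrow> complex"
  assumes cont: "continuous_on (U \<times> V) (\<lambda>(z, s). F z s)"
    and holo_s: "\<And>z. z \<in> U \<Longrightarrow> F z holomorphic_on V"
    and holo_z: "\<And>s. s \<in> V \<Longrightarrow> (\<lambda>z. F z s) holomorphic_on U"
    and "open U" "z0 \<in> U" "cball s0 r \<subseteq> V" "0 < r"
  shows "((\<lambda>z. deriv (F z) s0) has_field_derivative
           integral {0..1} (circle_deriv_integrand (\<lambda>\<sigma>. deriv (\<lambda>z. F z \<sigma>) z0) s0 r s0) / (2 * pi * \<i>))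
         (at z0)"
proof -
  obtain \<rho> where \<rho>: "0 < \<rho>" "cball z0 \<rho> \<subseteq> U"
    using \<open>open U\<close> \<open>z0 \<in> U\<close> open_contains_cball by blast
  define D where "D = ball z0 \<rho>"
  have D: "open D" "convex D" "z0 \<in> D" "D \<subseteq> U"
    using \<rho> by (auto simp: D_def)
  have "sphere s0 r \<subseteq> V"
    using \<open>cball s0 r \<subseteq> V\<close> by auto
  have "continuous_on (sphere s0 r \<times> cball z0 \<rho>) (\<lambda>(s, z). F z s)"
    by (rule continuous_on_subset[OF continuous_on_swap_args[OF cont]]) (use \<rho> \<open>sphere s0 r \<subseteq> V\<close> in auto)
  then have cont_deriv: "continuous_on (sphere s0 r \<times> D) (\<lambda>(s, z). deriv (\<lambda>z. F z s) z)"
    unfolding D_def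
    by (rule continuous_on_deriv_param[OF _ holomorphic_on_subset[OF holo_z]]) (use \<rho> \<open>sphere s0 r \<subseteq> V\<close> in auto)
  have "((\<lambda>z. integral {0..1} (circle_deriv_integrand (F z) s0 r s0)) has_field_derivative
          integral {0..1} (circle_deriv_integrand (\<lambda>\<sigma>. deriv (\<lambda>z. F z \<sigma>) z0) s0 r s0)) (at z0)"
  proof (rule has_field_derivative_circle_integral_param[OF D(1-3) _ _ _ continuous_on_swap_args[OF cont_deriv]])
    show "s0 \<in> ball s0 r"
      using \<open>0 < r\<close> by simp
    show "((\<lambda>z. F z \<sigma>) has_field_derivative deriv (\<lambda>z. F z \<sigma>) z) (at z)"
      if "z \<in> D" "\<sigma> \<in> sphere s0 r" for z \<sigma>
      using that D \<open>sphere s0 r \<subseteq> V\<close> by (intro holomorphic_derivI[OF holo_z \<open>open U\<close>]) auto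
    show "continuous_on (D \<times> sphere s0 r) (\<lambda>(z, \<sigma>). F z \<sigma>)"
      by (rule continuous_on_subset[OF cont]) (use D \<open>sphere s0 r \<subseteq> V\<close> in auto)
  qed
  then have deriv_integral:
    "((\<lambda>z. integral {0..1} (circle_deriv_integrand (F z) s0 r s0) / (2 * pi * \<i>)) has_field_derivative
       integral {0..1} (circle_deriv_integrand (\<lambda>\<sigma>. deriv (\<lambda>z. F z \<sigma>) z0) s0 r s0) / (2 * pi * \<i>)) (at z0)"
    by (rule DERIV_cdivide)
  have Cauchy: "deriv (F z) s0 = integral {0..1} (circle_deriv_integrand (F z) s0 r s0) / (2 * pi * \<i>)"
    if "z \<in> D" for z
  proof (rule deriv_eq_circle_integral)
    show "continuous_on (cball s0 r) (F z)"
      by (rule continuous_on_compose2[OF cont, where f="\<lambda>s. (z, s)", simplified])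
         (use that D \<open>cball s0 r \<subseteq> V\<close> in \<open>auto intro!: continuous_intros\<close>)
    show "F z holomorphic_on ball s0 r"
      by (rule holomorphic_on_subset[OF holo_s]) (use that D \<open>cball s0 r \<subseteq> V\<close> in auto)
  qed (use \<open>0 < r\<close> in simp)
  show ?thesis
    by (rule has_field_derivative_transform_within_open[OF deriv_integral D(1,3)]) (simp add: Cauchy)
qed

lemma deriv_deriv_commute:
  fixes F :: "complex \<Rightarrow> complex \<Rightarrow> complex"
  assumes cont: "continuous_on (U \<times> V) (\<lambda>(z, s). F z s)"
    and holo_s: "\<And>z. z \<in> U \<Longrightarrow> F z holomorphic_on V"
    and holo_z: "\<And>s. s \<in> V \<Longrightarrow> (\<lambda>z. F z s) holomorphic_on U"
    and "open U" "open V" "z0 \<in> U" "s0 \<in> V"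
  shows "((\<lambda>z. deriv (F z) s0) has_field_derivative deriv (\<lambda>s. deriv (\<lambda>z. F z s) z0) s0) (at z0)"
proof -
  define H where "H = (\<lambda>s. deriv (\<lambda>z. F z s) z0)"
  obtain r where r: "0 < r" "cball s0 r \<subseteq> V"
    using \<open>open V\<close> \<open>s0 \<in> V\<close> open_contains_cball by blast
  obtain \<rho> where \<rho>: "0 < \<rho>" "cball z0 \<rho> \<subseteq> U"
    using \<open>open U\<close> \<open>z0 \<in> U\<close> open_contains_cball by blast
  \<comment> \<open>the previous lemma with the roles of the two variables exchanged\<close>
  have "H holomorphic_on V"
    unfolding holomorphic_on_def field_differentiable_def H_def
    using has_field_derivative_deriv_param[OF continuous_on_swap_args[OF cont] holo_z holo_s \<open>open V\<close> _ \<rho>(2,1)]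
    by (blast intro: has_field_derivative_at_within)
  then have "deriv H s0 = integral {0..1} (circle_deriv_integrand H s0 r s0) / (2 * pi * \<i>)"
  proof (intro deriv_eq_circle_integral holomorphic_on_imp_continuous_on)
    show "H holomorphic_on cball s0 r" "H holomorphic_on ball s0 r"
      using r ball_subset_cball[of s0 r] holomorphic_on_subset[OF \<open>H holomorphic_on V\<close>] by blast+
  qed (use r in simp)
  with has_field_derivative_deriv_param[OF cont holo_s holo_z \<open>open U\<close> \<open>z0 \<in> U\<close> r(2,1)]
  show ?thesis by (simp add: H_def)
qed

section \<open>Partial derivatives on \<open>complex^n \<times> complex\<close>\<close>

text \<open>Coordinate \<^term>\<open>None\<close> is t and coordinate \<^term>\<open>Some a\<close> is x^a, so that the derivatives in t
  and in the x^a are treated uniformly.\<close>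

definition coord :: "(complex^'n) \<times> complex \<Rightarrow> 'n option \<Rightarrow> complex" where
  "coord p d = (case d of None \<Rightarrow> snd p | Some a \<Rightarrow> fst p $ a)"

definition set_coord :: "(complex^'n) \<times> complex \<Rightarrow> 'n option \<Rightarrow> complex \<Rightarrow> (complex^'n) \<times> complex" where
  "set_coord p d s = (case d of None \<Rightarrow> (fst p, s) | Some a \<Rightarrow> (upd (fst p) a s, snd p))"

lemma coord_set_coord_same [simp]: "coord (set_coord p d s) d = s"
  by (cases d) (auto simp: coord_def set_coord_def upd_def)

lemma coord_set_coord_other: "d \<noteq> e \<Longrightarrow> coord (set_coord p e s) d = coord p d"
  by (cases d; cases e) (auto simp: coord_def set_coord_def upd_def)

lemma set_coord_set_coord_same [simp]: "set_coord (set_coord p d s) d s' = set_coord p d s'"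
  by (cases d) (auto simp: set_coord_def upd_def vec_eq_iff)

lemma set_coord_commute:
  "d \<noteq> e \<Longrightarrow> set_coord (set_coord p e s) d s' = set_coord (set_coord p d s') e s"
  by (cases d; cases e) (auto simp: set_coord_def upd_def vec_eq_iff)

lemma set_coord_coord [simp]: "set_coord p d (coord p d) = p"
  by (cases d) (auto simp: coord_def set_coord_def upd_def vec_eq_iff prod_eq_iff)

lemma norm_axis: "norm (axis a c :: complex^'n) = norm c"
proof -
  have "(\<Sum>i\<in>UNIV. (norm (axis a c $ i))\<^sup>2) = (norm c)\<^sup>2"
    by (simp add: axis_def if_distrib[of "\<lambda>z. (norm z)\<^sup>2"] cong: if_cong)
  then show ?thesis
    by (simp add: norm_vec_def L2_set_def)
qed

lemma dist_set_coord: "dist (set_coord p d s) (set_coord p d s') = dist s s'"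
proof (cases d)
  case (Some a)
  have "upd (fst p) a s - upd (fst p) a s' = axis a (s - s')"
    by (simp add: upd_def axis_def vec_eq_iff)
  then show ?thesis
    using Some by (simp add: set_coord_def dist_Pair_Pair dist_norm norm_axis)
qed (simp add: set_coord_def dist_Pair_Pair)

lemma dist_set_coord_self: "dist (set_coord p d s) p = dist s (coord p d)"
  using dist_set_coord[of p d s "coord p d"] by simp

lemma dist_coord_le: "dist (coord q d) (coord p d) \<le> dist q p"
proof (cases d)
  case (Some a)
  have "dist (fst q $ a) (fst p $ a) \<le> dist (fst q) (fst p)"
    using Finite_Cartesian_Product.norm_nth_le[where x="fst q - fst p" and i=a] by (simp add: dist_norm)
  then show ?thesis
    using Some dist_fst_le[of q p] by (simp add: coord_def)
qed (simp add: coord_def dist_snd_le)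

lemma dist_set_coord_set_coord_le:
  assumes "e \<noteq> d"
  shows "dist (set_coord (set_coord p e z) d s) p \<le> dist z (coord p e) + dist s (coord p d)"
  using dist_triangle[of "set_coord (set_coord p e z) d s" p "set_coord p e z"] assms
  by (simp add: dist_set_coord_self coord_set_coord_other)

lemma dist_set_coord_le: "dist (set_coord q d z) p \<le> dist z (coord p d) + 2 * dist q p"
  using dist_triangle[of "set_coord q d z" p q] dist_triangle[of z "coord q d" "coord p d"]
    dist_coord_le[of q d p] dist_set_coord_self[of q d z] dist_commute[of "coord p d" "coord q d"]
  by linarith

lemma continuous_on_set_coord [continuous_intros]:
  assumes "continuous_on S f" "continuous_on S g"
  shows "continuous_on S (\<lambda>x. set_coord (f x) d (g x))"
proof (cases d)
  case (Some a)
  have "continuous_on S (\<lambda>x. if k = a then g x else fst (f x) $ k)" for k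
    by (cases "k = a") (auto intro!: continuous_intros assms)
  then show ?thesis
    using Some assms unfolding set_coord_def upd_def
    by (auto intro!: continuous_intros continuous_on_vec_lambda)
qed (auto simp: set_coord_def intro!: continuous_intros assms)

lemma continuous_on_coord [continuous_intros]:
  "continuous_on S f \<Longrightarrow> continuous_on S (\<lambda>x. coord (f x) d)"
  unfolding coord_def by (cases d) (auto intro!: continuous_intros)

definition sep_holomorphic_on ::
    "((complex^'n) \<times> complex) set \<Rightarrow> ((complex^'n) \<times> complex \<Rightarrow> complex) \<Rightarrow> bool" where
  "sep_holomorphic_on \<Omega> g \<longleftrightarrow> continuous_on \<Omega> g \<and>
     (\<forall>p\<in>\<Omega>. \<forall>d. (\<lambda>s. g (set_coord p d s)) field_differentiable at (coord p d))"

definition partial_deriv ::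
    "'n option \<Rightarrow> ((complex^'n) \<times> complex \<Rightarrow> complex) \<Rightarrow> (complex^'n) \<times> complex \<Rightarrow> complex" where
  "partial_deriv d g p = deriv (\<lambda>s. g (set_coord p d s)) (coord p d)"

lemma sep_holomorphic_on_imp_continuous_on: "sep_holomorphic_on \<Omega> g \<Longrightarrow> continuous_on \<Omega> g"
  by (simp add: sep_holomorphic_on_def)

lemma has_field_derivative_partial_deriv:
  "sep_holomorphic_on \<Omega> g \<Longrightarrow> p \<in> \<Omega> \<Longrightarrow>
     ((\<lambda>s. g (set_coord p d s)) has_field_derivative partial_deriv d g p) (at (coord p d))"
  unfolding sep_holomorphic_on_def partial_deriv_def using DERIV_deriv_iff_field_differentiable by blast

lemma open_coord_slice: "open \<Omega> \<Longrightarrow> open {s. set_coord p d s \<in> \<Omega>}"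
proof -
  assume "open \<Omega>"
  moreover have "continuous_on UNIV (set_coord p d)"
    by (intro continuous_intros)
  ultimately show ?thesis
    using open_vimage[of \<Omega> "set_coord p d"] by (simp add: vimage_def)
qed

lemma holomorphic_on_coord_slice:
  assumes "sep_holomorphic_on \<Omega> g"
  shows "(\<lambda>s. g (set_coord p d s)) holomorphic_on {s. set_coord p d s \<in> \<Omega>}"
  unfolding holomorphic_on_def
proof
  fix s assume "s \<in> {s. set_coord p d s \<in> \<Omega>}"
  with assms have "(\<lambda>s'. g (set_coord (set_coord p d s) d s')) field_differentiable at s"
    unfolding sep_holomorphic_on_def by (metis coord_set_coord_same mem_Collect_eq)
  then show "(\<lambda>s. g (set_coord p d s)) field_differentiable at s within {s. set_coord p d s \<in> \<Omega>}"
    by (auto intro: field_differentiable_at_within)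
qed

lemma partial_deriv_cong:
  assumes "open \<Omega>" "p \<in> \<Omega>" "\<And>q. q \<in> \<Omega> \<Longrightarrow> f q = g q"
  shows "partial_deriv d f p = partial_deriv d g p"
  unfolding partial_deriv_def
proof (rule deriv_cong_ev)
  have "eventually (\<lambda>s. set_coord p d s \<in> \<Omega>) (nhds (coord p d))"
    using eventually_nhds_in_open[OF open_coord_slice[OF \<open>open \<Omega>\<close>], of "coord p d" p d] \<open>p \<in> \<Omega>\<close>
    by simp
  then show "\<forall>\<^sub>F s in nhds (coord p d). f (set_coord p d s) = g (set_coord p d s)"
    by eventually_elim (use assms(3) in auto)
qed simp

lemma sep_holomorphic_on_const: "sep_holomorphic_on \<Omega> (\<lambda>_. c)"
  by (auto simp: sep_holomorphic_on_def intro: continuous_intros)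

lemma sep_holomorphic_on_add:
  "sep_holomorphic_on \<Omega> f \<Longrightarrow> sep_holomorphic_on \<Omega> g \<Longrightarrow> sep_holomorphic_on \<Omega> (\<lambda>q. f q + g q)"
  by (auto simp: sep_holomorphic_on_def intro!: continuous_intros Derivative.field_differentiable_add)

lemma sep_holomorphic_on_minus:
  "sep_holomorphic_on \<Omega> f \<Longrightarrow> sep_holomorphic_on \<Omega> (\<lambda>q. - f q)"
  by (auto simp: sep_holomorphic_on_def intro!: continuous_intros Derivative.field_differentiable_minus)

lemma sep_holomorphic_on_mult:
  "sep_holomorphic_on \<Omega> f \<Longrightarrow> sep_holomorphic_on \<Omega> g \<Longrightarrow> sep_holomorphic_on \<Omega> (\<lambda>q. f q * g q)"
  by (auto simp: sep_holomorphic_on_def intro!: continuous_intros field_differentiable_mult)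

lemma sep_holomorphic_on_sum:
  "finite S \<Longrightarrow> (\<And>i. i \<in> S \<Longrightarrow> sep_holomorphic_on \<Omega> (f i)) \<Longrightarrow>
     sep_holomorphic_on \<Omega> (\<lambda>q. \<Sum>i\<in>S. f i q)"
  by (induction S rule: finite_induct) (auto intro: sep_holomorphic_on_add sep_holomorphic_on_const)

lemma partial_deriv_const: "partial_deriv d (\<lambda>_. c) p = 0"
  by (simp add: partial_deriv_def)

lemma partial_deriv_add:
  "sep_holomorphic_on \<Omega> f \<Longrightarrow> sep_holomorphic_on \<Omega> g \<Longrightarrow> p \<in> \<Omega> \<Longrightarrow>
     partial_deriv d (\<lambda>q. f q + g q) p = partial_deriv d f p + partial_deriv d g p"
  unfolding partial_deriv_def[of d "\<lambda>q. f q + g q"]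
  by (intro DERIV_imp_deriv Deriv.field_differentiable_add has_field_derivative_partial_deriv)

lemma partial_deriv_minus:
  "sep_holomorphic_on \<Omega> f \<Longrightarrow> p \<in> \<Omega> \<Longrightarrow> partial_deriv d (\<lambda>q. - f q) p = - partial_deriv d f p"
  unfolding partial_deriv_def[of d "\<lambda>q. - f q"]
  by (intro DERIV_imp_deriv Deriv.field_differentiable_minus has_field_derivative_partial_deriv)

lemma partial_deriv_mult:
  assumes "sep_holomorphic_on \<Omega> f" "sep_holomorphic_on \<Omega> g" "p \<in> \<Omega>"
  shows "partial_deriv d (\<lambda>q. f q * g q) p = partial_deriv d f p * g p + f p * partial_deriv d g p"
proof -
  have "((\<lambda>s. f (set_coord p d s) * g (set_coord p d s)) has_field_derivative
          partial_deriv d f p * g p + f p * partial_deriv d g p) (at (coord p d))"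
    using DERIV_mult[OF has_field_derivative_partial_deriv[OF assms(1,3)]
                        has_field_derivative_partial_deriv[OF assms(2,3)]]
    by (simp add: mult.commute)
  then show ?thesis
    unfolding partial_deriv_def[of d "\<lambda>q. f q * g q"] by (rule DERIV_imp_deriv)
qed

lemma partial_deriv_sum:
  assumes "finite S" "\<And>i. i \<in> S \<Longrightarrow> sep_holomorphic_on \<Omega> (f i)" "p \<in> \<Omega>"
  shows "partial_deriv d (\<lambda>q. \<Sum>i\<in>S. f i q) p = (\<Sum>i\<in>S. partial_deriv d (f i) p)"
  using assms
proof (induction S rule: finite_induct)
  case (insert i S)
  then show ?case
    by (simp add: partial_deriv_add[of \<Omega> "f i" "\<lambda>q. \<Sum>i\<in>S. f i q"] sep_holomorphic_on_sum)
qed (simp add: partial_deriv_const)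

lemma has_field_derivative_partial_deriv_other:
  assumes "open \<Omega>" and g: "sep_holomorphic_on \<Omega> g" and "p \<in> \<Omega>" "e \<noteq> d"
  shows "((\<lambda>z. partial_deriv d g (set_coord p e z)) has_field_derivative
           partial_deriv d (partial_deriv e g) p) (at (coord p e))"
proof -
  obtain \<epsilon> where "0 < \<epsilon>" "ball p \<epsilon> \<subseteq> \<Omega>"
    using \<open>open \<Omega>\<close> \<open>p \<in> \<Omega>\<close> open_contains_ball by blast
  define U where "U = ball (coord p e) (\<epsilon>/2)"
  define V where "V = ball (coord p d) (\<epsilon>/2)"
  define F where "F = (\<lambda>z s. g (set_coord (set_coord p e z) d s))"
  have swap: "set_coord (set_coord p e z) d s = set_coord (set_coord p d s) e z" for z s
    using set_coord_commute \<open>e \<noteq> d\<close> by metis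
  have in_\<Omega>: "set_coord (set_coord p e z) d s \<in> \<Omega>" if "z \<in> U" "s \<in> V" for z s
    using that dist_set_coord_set_coord_le[OF \<open>e \<noteq> d\<close>, of p z s] \<open>ball p \<epsilon> \<subseteq> \<Omega>\<close>
    by (auto simp: U_def V_def dist_commute)
  have "continuous_on (U \<times> V) (\<lambda>x. set_coord (set_coord p e (fst x)) d (snd x))"
    "(\<lambda>x. set_coord (set_coord p e (fst x)) d (snd x)) ` (U \<times> V) \<subseteq> \<Omega>"
    using in_\<Omega> by (auto intro!: continuous_intros)
  from continuous_on_compose2[OF sep_holomorphic_on_imp_continuous_on[OF g] this]
  have cont: "continuous_on (U \<times> V) (\<lambda>(z, s). F z s)"
    by (simp add: F_def split_def)
  have holo_s: "F z holomorphic_on V" if "z \<in> U" for z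
    unfolding F_def
    by (rule holomorphic_on_subset[OF holomorphic_on_coord_slice[OF g]]) (use in_\<Omega>[OF that] in auto)
  have holo_z: "(\<lambda>z. F z s) holomorphic_on U" if "s \<in> V" for s
    unfolding F_def swap
    by (rule holomorphic_on_subset[OF holomorphic_on_coord_slice[OF g]]) (use in_\<Omega>[OF _ that] swap in auto)
  have "((\<lambda>z. deriv (F z) (coord p d)) has_field_derivative
           deriv (\<lambda>s. deriv (\<lambda>z. F z s) (coord p e)) (coord p d)) (at (coord p e))"
    using \<open>0 < \<epsilon>\<close> by (intro deriv_deriv_commute[OF cont holo_s holo_z]) (auto simp: U_def V_def)
  moreover have "deriv (F z) (coord p d) = partial_deriv d g (set_coord p e z)" for z
    using \<open>e \<noteq> d\<close> by (simp add: F_def partial_deriv_def coord_set_coord_other)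
  moreover have "deriv (\<lambda>z. F z s) (coord p e) = partial_deriv e g (set_coord p d s)" for s
    using \<open>e \<noteq> d\<close> by (simp add: F_def partial_deriv_def coord_set_coord_other swap)
  ultimately show ?thesis
    by (simp add: partial_deriv_def[of d "partial_deriv e g"])
qed

lemma partial_deriv_commute:
  assumes "open \<Omega>" "sep_holomorphic_on \<Omega> g" "p \<in> \<Omega>"
  shows "partial_deriv e (partial_deriv d g) p = partial_deriv d (partial_deriv e g) p"
proof (cases "e = d")
  case False
  then show ?thesis
    using DERIV_imp_deriv[OF has_field_derivative_partial_deriv_other[OF assms False]]
    by (simp add: partial_deriv_def[of e "partial_deriv d g"])
qed simp

lemma continuous_on_partial_deriv:
  assumes "open \<Omega>" and g: "sep_holomorphic_on \<Omega> g"
  shows "continuous_on \<Omega> (partial_deriv d g)"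
proof (rule continuous_at_imp_continuous_on, rule ballI)
  fix p assume "p \<in> \<Omega>"
  obtain \<epsilon> where "0 < \<epsilon>" "ball p \<epsilon> \<subseteq> \<Omega>"
    using \<open>open \<Omega>\<close> \<open>p \<in> \<Omega>\<close> open_contains_ball by blast
  define R where "R = \<epsilon>/4"
  define c where "c = coord p d"
  have in_\<Omega>: "set_coord q d z \<in> \<Omega>" if "q \<in> ball p R" "z \<in> cball c R" for q z
    using that dist_set_coord_le[of q d z p] \<open>ball p \<epsilon> \<subseteq> \<Omega>\<close> \<open>0 < \<epsilon>\<close>
    by (auto simp: R_def c_def dist_commute)
  have "continuous_on (ball p R \<times> cball c R) (\<lambda>x. set_coord (fst x) d (snd x))"
    "(\<lambda>x. set_coord (fst x) d (snd x)) ` (ball p R \<times> cball c R) \<subseteq> \<Omega>"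
    using in_\<Omega> by (auto intro!: continuous_intros)
  from continuous_on_compose2[OF sep_holomorphic_on_imp_continuous_on[OF g] this]
  have "continuous_on (ball p R \<times> cball c R) (\<lambda>(q, z). g (set_coord q d z))"
    by (simp add: split_def)
  moreover have "(\<lambda>z. g (set_coord q d z)) holomorphic_on ball c R" if "q \<in> ball p R" for q
    by (rule holomorphic_on_subset[OF holomorphic_on_coord_slice[OF g]]) (use in_\<Omega>[OF that] in auto)
  ultimately have cont_deriv:
      "continuous_on (ball p R \<times> ball c R) (\<lambda>(q, w). deriv (\<lambda>z. g (set_coord q d z)) w)"
    by (rule continuous_on_deriv_param)
  have "continuous_on (ball p R) (\<lambda>q. (q, coord q d))"
    by (intro continuous_intros)
  moreover have "(\<lambda>q. (q, coord q d)) ` ball p R \<subseteq> ball p R \<times> ball c R"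
  proof -
    have "coord q d \<in> ball c R" if "q \<in> ball p R" for q
      using that dist_coord_le[of q d p] by (simp add: c_def dist_commute)
    then show ?thesis by auto
  qed
  ultimately have "continuous_on (ball p R) (\<lambda>x. (\<lambda>(q, w). deriv (\<lambda>z. g (set_coord q d z)) w) (x, coord x d))"
    by (rule continuous_on_compose2[OF cont_deriv])
  then have "continuous_on (ball p R) (partial_deriv d g)"
    by (simp add: partial_deriv_def[abs_def])
  then show "isCont (partial_deriv d g) p"
    using \<open>0 < \<epsilon>\<close> by (simp add: R_def continuous_on_eq_continuous_at)
qed

lemma sep_holomorphic_on_partial_deriv:
  assumes "open \<Omega>" and g: "sep_holomorphic_on \<Omega> g"
  shows "sep_holomorphic_on \<Omega> (partial_deriv d g)"
  unfolding sep_holomorphic_on_def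
proof (intro conjI ballI allI)
  show "continuous_on \<Omega> (partial_deriv d g)"
    by (rule continuous_on_partial_deriv[OF assms])
next
  fix p e assume "p \<in> \<Omega>"
  show "(\<lambda>s. partial_deriv d g (set_coord p e s)) field_differentiable at (coord p e)"
  proof (cases "e = d")
    case True
    have "deriv (\<lambda>s. g (set_coord p d s)) holomorphic_on {s. set_coord p d s \<in> \<Omega>}"
      by (rule holomorphic_deriv[OF holomorphic_on_coord_slice[OF g] open_coord_slice[OF \<open>open \<Omega>\<close>]])
    then show ?thesis
      using True \<open>p \<in> \<Omega>\<close> holomorphic_on_imp_differentiable_at[OF _ open_coord_slice[OF \<open>open \<Omega>\<close>]]
      by (simp add: partial_deriv_def)
  next
    case False
    then show ?thesis
      using has_field_derivative_partial_deriv_other[OF assms \<open>p \<in> \<Omega>\<close>]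
      by (auto simp: field_differentiable_def)
  qed
qed

section \<open>Matrix-valued functions\<close>

lemma matrix_add_rdistrib: "((A::'a::semiring_1^'n^'m) + B) ** C = A ** C + B ** C"
  by (simp add: vec_eq_iff matrix_matrix_mult_def sum.distrib distrib_right)

lemma matrix_minus_left: "(- A::'a::ring_1^'n^'m) ** B = - (A ** B)"
  by (simp add: vec_eq_iff matrix_matrix_mult_def sum_negf)

lemma matrix_minus_right: "(A::'a::ring_1^'n^'m) ** (- B) = - (A ** B)"
  by (simp add: vec_eq_iff matrix_matrix_mult_def sum_negf)

lemma matrix_sum_ldistrib: "finite I \<Longrightarrow> (A::'a::semiring_1^'n^'m) ** (\<Sum>i\<in>I. B i) = (\<Sum>i\<in>I. A ** B i)"
  by (induction I rule: finite_induct) (auto simp: matrix_add_ldistrib)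

lemma matrix_sum_rdistrib: "finite I \<Longrightarrow> (\<Sum>i\<in>I. A i :: 'a::semiring_1^'n^'m) ** B = (\<Sum>i\<in>I. A i ** B)"
  by (induction I rule: finite_induct) (auto simp: matrix_add_rdistrib)

definition entry :: "'n mfun \<Rightarrow> 'n \<Rightarrow> 'n \<Rightarrow> (complex^'n) \<times> complex \<Rightarrow> complex" where
  "entry f i j p = f (fst p) (snd p) $ i $ j"

definition mpartial :: "'n::finite option \<Rightarrow> 'n mfun \<Rightarrow> 'n mfun" where
  "mpartial d f x t = (\<chi> i j. partial_deriv d (entry f i j) (x, t))"

lemma entry_apply [simp]: "entry f i j (x, t) = f x t $ i $ j"
  by (simp add: entry_def)

lemma entry_mpartial: "entry (mpartial d f) i j = partial_deriv d (entry f i j)"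
  by (simp add: fun_eq_iff entry_def mpartial_def)

lemma holo_on_iff_sep_holomorphic_on:
  "holo_on \<Omega> g \<longleftrightarrow> sep_holomorphic_on \<Omega> (\<lambda>p. g (fst p) (snd p))"
proof -
  have slices: "(\<forall>d. (\<lambda>s. g (fst (set_coord (x, t) d s)) (snd (set_coord (x, t) d s)))
               field_differentiable at (coord (x, t) d)) \<longleftrightarrow>
        (\<forall>a. (\<lambda>s. g (upd x a s) t) field_differentiable at (x $ a)) \<and>
        (\<lambda>s. g x s) field_differentiable at t" for x t
    by (auto simp: set_coord_def coord_def split_option_all)
  then show ?thesis
    unfolding holo_on_def sep_holomorphic_on_def Ball_def split_paired_All slices by blast
qed

lemma mholo_on_iff: "mholo_on \<Omega> f \<longleftrightarrow> (\<forall>i j. sep_holomorphic_on \<Omega> (entry f i j))"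
  by (simp add: mholo_on_def holo_on_iff_sep_holomorphic_on entry_def[abs_def])

lemma px_eq_mpartial: "px a f = mpartial (Some a) f"
  by (simp add: fun_eq_iff vec_eq_iff px_def mpartial_def partial_deriv_def set_coord_def coord_def)

lemma pt_eq_mpartial: "pt f = mpartial None f"
  by (simp add: fun_eq_iff vec_eq_iff pt_def mpartial_def partial_deriv_def set_coord_def coord_def)

lemma entry_mult: "entry (\<lambda>x t. f x t ** g x t) i j = (\<lambda>p. \<Sum>l\<in>UNIV. entry f i l p * entry g l j p)"
  by (simp add: fun_eq_iff entry_def matrix_matrix_mult_def)

lemma entry_add: "entry (\<lambda>x t. f x t + g x t) i j = (\<lambda>p. entry f i j p + entry g i j p)"
  by (simp add: fun_eq_iff entry_def)

lemma entry_minus: "entry (\<lambda>x t. - f x t) i j = (\<lambda>p. - entry f i j p)"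
  by (simp add: fun_eq_iff entry_def)

lemma entry_sum: "entry (\<lambda>x t. \<Sum>l\<in>I. f l x t) i j = (\<lambda>p. \<Sum>l\<in>I. entry (f l) i j p)"
  by (simp add: fun_eq_iff entry_def sum_component)

lemma entry_const: "entry (\<lambda>x t. c) i j = (\<lambda>p. c $ i $ j)"
  by (simp add: fun_eq_iff entry_def)

lemma mholo_on_mult: "mholo_on \<Omega> f \<Longrightarrow> mholo_on \<Omega> g \<Longrightarrow> mholo_on \<Omega> (\<lambda>x t. f x t ** g x t)"
  unfolding mholo_on_iff entry_mult by (auto intro!: sep_holomorphic_on_sum sep_holomorphic_on_mult)

lemma mholo_on_add: "mholo_on \<Omega> f \<Longrightarrow> mholo_on \<Omega> g \<Longrightarrow> mholo_on \<Omega> (\<lambda>x t. f x t + g x t)"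
  unfolding mholo_on_iff entry_add by (auto intro!: sep_holomorphic_on_add)

lemma mholo_on_minus: "mholo_on \<Omega> f \<Longrightarrow> mholo_on \<Omega> (\<lambda>x t. - f x t)"
  unfolding mholo_on_iff entry_minus by (auto intro!: sep_holomorphic_on_minus)

lemma mholo_on_sum:
  "finite I \<Longrightarrow> (\<And>l. l \<in> I \<Longrightarrow> mholo_on \<Omega> (f l)) \<Longrightarrow> mholo_on \<Omega> (\<lambda>x t. \<Sum>l\<in>I. f l x t)"
  unfolding mholo_on_iff entry_sum by (auto intro!: sep_holomorphic_on_sum)

lemma mholo_on_const: "mholo_on \<Omega> (\<lambda>x t. c)"
  unfolding mholo_on_iff entry_const by (auto intro!: sep_holomorphic_on_const)

lemma mholo_on_mpartial: "open \<Omega> \<Longrightarrow> mholo_on \<Omega> f \<Longrightarrow> mholo_on \<Omega> (mpartial d f)"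
  unfolding mholo_on_iff entry_mpartial by (auto intro!: sep_holomorphic_on_partial_deriv)

lemma mpartial_const: "mpartial d (\<lambda>x t. c) = (\<lambda>x t. 0)"
  by (simp add: fun_eq_iff vec_eq_iff mpartial_def entry_const partial_deriv_const)

lemma mpartial_add:
  "mholo_on \<Omega> f \<Longrightarrow> mholo_on \<Omega> g \<Longrightarrow> (x, t) \<in> \<Omega> \<Longrightarrow>
     mpartial d (\<lambda>x t. f x t + g x t) x t = mpartial d f x t + mpartial d g x t"
  by (auto simp: vec_eq_iff mpartial_def entry_add partial_deriv_add[of \<Omega>] mholo_on_iff)

lemma mpartial_minus:
  "mholo_on \<Omega> f \<Longrightarrow> (x, t) \<in> \<Omega> \<Longrightarrow> mpartial d (\<lambda>x t. - f x t) x t = - mpartial d f x t"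
  by (auto simp: vec_eq_iff mpartial_def entry_minus partial_deriv_minus[of \<Omega>] mholo_on_iff)

lemma mpartial_sum:
  "finite I \<Longrightarrow> (\<And>l. l \<in> I \<Longrightarrow> mholo_on \<Omega> (f l)) \<Longrightarrow> (x, t) \<in> \<Omega> \<Longrightarrow>
     mpartial d (\<lambda>x t. \<Sum>l\<in>I. f l x t) x t = (\<Sum>l\<in>I. mpartial d (f l) x t)"
  by (auto simp: vec_eq_iff mpartial_def entry_sum partial_deriv_sum[of _ \<Omega>] mholo_on_iff sum_component)

lemma mpartial_mult:
  assumes "mholo_on \<Omega> f" "mholo_on \<Omega> g" "(x, t) \<in> \<Omega>"
  shows "mpartial d (\<lambda>x t. f x t ** g x t) x t = mpartial d f x t ** g x t + f x t ** mpartial d g x t"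
proof -
  have holo: "sep_holomorphic_on \<Omega> (entry f i j)" "sep_holomorphic_on \<Omega> (entry g i j)" for i j
    using assms by (auto simp: mholo_on_iff)
  have "partial_deriv d (\<lambda>p. \<Sum>l\<in>UNIV. entry f i l p * entry g l j p) (x, t) =
          (\<Sum>l\<in>UNIV. partial_deriv d (entry f i l) (x, t) * g x t $ l $ j +
                      f x t $ i $ l * partial_deriv d (entry g l j) (x, t))" for i j
    using assms(3)
    by (simp add: partial_deriv_sum[of _ \<Omega>] partial_deriv_mult[of \<Omega>] holo sep_holomorphic_on_mult)
  then show ?thesis
    unfolding mpartial_def entry_mult by (simp add: vec_eq_iff matrix_matrix_mult_def sum.distrib)
qed

lemma mpartial_cong:
  assumes "open \<Omega>" "(x, t) \<in> \<Omega>" "\<And>x t. (x, t) \<in> \<Omega> \<Longrightarrow> f x t = g x t"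
  shows "mpartial d f x t = mpartial d g x t"
proof -
  have "entry f i j q = entry g i j q" if "q \<in> \<Omega>" for q i j
    using assms(3)[of "fst q" "snd q"] that by (simp add: entry_def)
  then have "partial_deriv d (entry f i j) (x, t) = partial_deriv d (entry g i j) (x, t)" for i j
    by (intro partial_deriv_cong[OF assms(1,2)])
  then show ?thesis
    by (simp add: vec_eq_iff mpartial_def)
qed

lemma mpartial_commute:
  assumes "open \<Omega>" "mholo_on \<Omega> f" "(x, t) \<in> \<Omega>"
  shows "mpartial d (mpartial e f) x t = mpartial e (mpartial d f) x t"
proof -
  have "partial_deriv d (partial_deriv e (entry f i j)) (x, t) =
          partial_deriv e (partial_deriv d (entry f i j)) (x, t)" for i j
    using assms by (intro partial_deriv_commute) (auto simp: mholo_on_iff)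
  then show ?thesis
    by (simp add: vec_eq_iff mpartial_def entry_mpartial)
qed

lemma diag_mat_mpartial:
  assumes "open \<Omega>" "(x, t) \<in> \<Omega>" "\<And>x t. (x, t) \<in> \<Omega> \<Longrightarrow> diag_mat (f x t)"
  shows "diag_mat (mpartial d f x t)"
proof -
  have "entry f i j q = 0" if "q \<in> \<Omega>" "i \<noteq> j" for q i j
    using assms(3)[of "fst q" "snd q"] that by (simp add: entry_def diag_mat_def)
  then have "partial_deriv d (entry f i j) (x, t) = partial_deriv d (\<lambda>_. 0) (x, t)" if "i \<noteq> j" for i j
    using that by (intro partial_deriv_cong[OF assms(1,2)])
  then show ?thesis
    by (simp add: diag_mat_def mpartial_def partial_deriv_const)
qed

section \<open>Laurent series in hbar\<close>

text \<open>\<^const>\<open>smult\<close> is only meaningful for series bounded below: otherwise its index set can be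
  infinite, and then the sum is 0.\<close>

definition laurent :: "('n::finite) ser \<Rightarrow> bool" where
  "laurent X \<longleftrightarrow> (\<exists>p. \<forall>k<p. X k = (\<lambda>_ _. 0))"

definition ser_holo_on :: "((complex^'n) \<times> complex) set \<Rightarrow> ('n::finite) ser \<Rightarrow> bool" where
  "ser_holo_on \<Omega> X \<longleftrightarrow> (\<forall>k. mholo_on \<Omega> (X k))"

definition spartial :: "'n::finite option \<Rightarrow> 'n ser \<Rightarrow> 'n ser" where
  "spartial d X k = mpartial d (X k)"

lemma spx_eq_spartial: "spx a X = spartial (Some a) X"
  by (simp add: fun_eq_iff spx_def spartial_def px_eq_mpartial)

lemma spt_eq_spartial: "spt X = spartial None X"
  by (simp add: fun_eq_iff spt_def spartial_def pt_eq_mpartial)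

lemma laurent_common_bound:
  assumes "laurent X" "laurent Y" "laurent Z"
  obtains p where "\<forall>k<p. X k = (\<lambda>_ _. 0)" "\<forall>k<p. Y k = (\<lambda>_ _. 0)" "\<forall>k<p. Z k = (\<lambda>_ _. 0)"
proof -
  obtain p q r where "\<forall>k<p. X k = (\<lambda>_ _. 0)" "\<forall>k<q. Y k = (\<lambda>_ _. 0)" "\<forall>k<r. Z k = (\<lambda>_ _. 0)"
    using assms by (auto simp: laurent_def)
  then show thesis
    by (intro that[of "min p (min q r)"]) auto
qed

lemma smult_eq_sum_superset:
  assumes "\<forall>k<p. X k = (\<lambda>_ _. 0)" "\<forall>k<q. Y k = (\<lambda>_ _. 0)" "finite I" "{p..k-q} \<subseteq> I"
  shows "smult X Y k x t = (\<Sum>i\<in>I. X i x t ** Y (k-i) x t)"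
proof -
  let ?S = "{i. X i \<noteq> (\<lambda>_ _. 0) \<and> Y (k - i) \<noteq> (\<lambda>_ _. 0)}"
  have "?S \<subseteq> I"
  proof
    fix i assume "i \<in> ?S"
    then have "p \<le> i" "q \<le> k - i"
      using assms(1,2) by (auto simp: not_less[symmetric])
    then show "i \<in> I" using assms(4) by auto
  qed
  moreover have "X i x t ** Y (k - i) x t = 0" if "i \<notin> ?S" for i
    using that by auto
  ultimately show ?thesis
    unfolding smult_def by (intro sum.mono_neutral_left[OF assms(3)]) auto
qed

lemma smult_eq_sum:
  "\<forall>k<p. X k = (\<lambda>_ _. 0) \<Longrightarrow> \<forall>k<q. Y k = (\<lambda>_ _. 0) \<Longrightarrow>
     smult X Y k x t = (\<Sum>i\<in>{p..k-q}. X i x t ** Y (k-i) x t)"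
  by (rule smult_eq_sum_superset) auto

lemma smult_vanishes_below:
  "\<forall>k<p. X k = (\<lambda>_ _. 0) \<Longrightarrow> \<forall>k<q. Y k = (\<lambda>_ _. 0) \<Longrightarrow> \<forall>k<p+q. smult X Y k = (\<lambda>_ _. 0)"
  by (auto simp: fun_eq_iff smult_eq_sum)

lemma laurent_smult [simp]: "laurent X \<Longrightarrow> laurent Y \<Longrightarrow> laurent (smult X Y)"
  unfolding laurent_def by (blast dest: smult_vanishes_below)

lemma laurent_add [simp]:
  assumes "laurent X" "laurent Y" shows "laurent (X + Y)"
proof -
  obtain p where "\<forall>k<p. X k = (\<lambda>_ _. 0)" "\<forall>k<p. Y k = (\<lambda>_ _. 0)"
    by (rule laurent_common_bound[OF assms(1,2,2)])
  then show ?thesis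
    unfolding laurent_def by (intro exI[of _ p]) (simp add: plus_fun_def)
qed

lemma laurent_minus [simp]: "laurent X \<Longrightarrow> laurent (- X)"
  unfolding laurent_def by (metis (no_types, lifting) minus_zero uminus_apply)

lemma laurent_diff [simp]: "laurent X \<Longrightarrow> laurent Y \<Longrightarrow> laurent (X - Y)"
  using laurent_add[of X "- Y"] by simp

lemma laurent_spartial [simp]: "laurent X \<Longrightarrow> laurent (spartial d X)"
  unfolding laurent_def spartial_def by (metis mpartial_const)

lemma laurent_sone [simp]: "laurent sone"
  unfolding laurent_def sone_def by (intro exI[of _ 0]) simp

lemma smult_cong:
  assumes "laurent X" "laurent X'" "laurent Y" "laurent Y'"
    and "\<And>i. X i x t = X' i x t" "\<And>i. Y i x t = Y' i x t"
  shows "smult X Y k x t = smult X' Y' k x t"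
proof -
  obtain p where "\<forall>k<p. X k = (\<lambda>_ _. 0)" "\<forall>k<p. X' k = (\<lambda>_ _. 0)"
    by (rule laurent_common_bound[OF assms(1,2,2)])
  moreover obtain q where "\<forall>k<q. Y k = (\<lambda>_ _. 0)" "\<forall>k<q. Y' k = (\<lambda>_ _. 0)"
    by (rule laurent_common_bound[OF assms(3,4,4)])
  ultimately show ?thesis
    using assms(5,6) by (simp add: smult_eq_sum)
qed

lemma smult_add_left:
  assumes "laurent X" "laurent Y" "laurent Z"
  shows "smult (X + Y) Z k x t = smult X Z k x t + smult Y Z k x t"
proof -
  obtain p where "\<forall>k<p. X k = (\<lambda>_ _. 0)" "\<forall>k<p. Y k = (\<lambda>_ _. 0)" "\<forall>k<p. Z k = (\<lambda>_ _. 0)"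
    by (rule laurent_common_bound[OF assms])
  moreover from this have "\<forall>k<p. (X + Y) k = (\<lambda>_ _. 0)"
    by (simp add: plus_fun_def)
  ultimately show ?thesis
    by (simp add: smult_eq_sum[of p _ p] matrix_add_rdistrib sum.distrib)
qed


lemma smult_add_right:
  assumes "laurent X" "laurent Y" "laurent Z"
  shows "smult X (Y + Z) k x t = smult X Y k x t + smult X Z k x t"
proof -
  obtain p where "\<forall>k<p. X k = (\<lambda>_ _. 0)" "\<forall>k<p. Y k = (\<lambda>_ _. 0)" "\<forall>k<p. Z k = (\<lambda>_ _. 0)"
    by (rule laurent_common_bound[OF assms])
  moreover from this have "\<forall>k<p. (Y + Z) k = (\<lambda>_ _. 0)"
    by (simp add: plus_fun_def)
  ultimately show ?thesis
    by (simp add: smult_eq_sum[of p _ p] matrix_add_ldistrib sum.distrib)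
qed

lemma smult_minus_left:
  assumes "laurent X" "laurent Y"
  shows "smult (- X) Y k x t = - smult X Y k x t"
proof -
  obtain p where "\<forall>k<p. X k = (\<lambda>_ _. 0)" "\<forall>k<p. Y k = (\<lambda>_ _. 0)"
    by (rule laurent_common_bound[OF assms(1,2,2)])
  moreover from this have "\<forall>k<p. (- X) k = (\<lambda>_ _. 0)"
    by (simp add: fun_eq_iff)
  ultimately show ?thesis
    by (simp add: smult_eq_sum[of p _ p] matrix_minus_left sum_negf)
qed

lemma smult_minus_right:
  assumes "laurent X" "laurent Y"
  shows "smult X (- Y) k x t = - smult X Y k x t"
proof -
  obtain p where "\<forall>k<p. X k = (\<lambda>_ _. 0)" "\<forall>k<p. Y k = (\<lambda>_ _. 0)"
    by (rule laurent_common_bound[OF assms(1,2,2)])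
  moreover from this have "\<forall>k<p. (- Y) k = (\<lambda>_ _. 0)"
    by (simp add: fun_eq_iff)
  ultimately show ?thesis
    by (simp add: smult_eq_sum[of p _ p] matrix_minus_right sum_negf)
qed

lemma smult_diff_left:
  "laurent X \<Longrightarrow> laurent Y \<Longrightarrow> laurent Z \<Longrightarrow> smult (X - Y) Z k x t = smult X Z k x t - smult Y Z k x t"
  by (simp only: diff_conv_add_uminus smult_add_left laurent_minus smult_minus_left)

lemma smult_diff_right:
  "laurent X \<Longrightarrow> laurent Y \<Longrightarrow> laurent Z \<Longrightarrow> smult X (Y - Z) k x t = smult X Y k x t - smult X Z k x t"
  by (simp only: diff_conv_add_uminus smult_add_right laurent_minus smult_minus_right)

lemma smult_sone_left: "laurent X \<Longrightarrow> smult sone X k x t = X k x t"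
proof -
  assume "laurent X"
  then obtain p where "\<forall>k<p. X k = (\<lambda>_ _. 0)"
    by (auto simp: laurent_def)
  then have "smult sone X k x t = (\<Sum>i\<in>insert 0 {0..k-p}. sone i x t ** X (k-i) x t)"
    by (intro smult_eq_sum_superset) (auto simp: sone_def)
  also have "\<dots> = (\<Sum>i\<in>insert 0 {0..k-p}. if i = 0 then X k x t else 0)"
    by (rule sum.cong) (auto simp: sone_def)
  finally show ?thesis
    by simp
qed

lemma smult_assoc:
  assumes "laurent X" "laurent Y" "laurent Z"
  shows "smult (smult X Y) Z k x t = smult X (smult Y Z) k x t"
proof -
  obtain p where X: "\<forall>k<p. X k = (\<lambda>_ _. 0)" and Y: "\<forall>k<p. Y k = (\<lambda>_ _. 0)"
    and Z: "\<forall>k<p. Z k = (\<lambda>_ _. 0)"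
    by (rule laurent_common_bound[OF assms])
  define I where "I = {p+p..k-p}"
  define J where "J = {p..k-p-p}"
  have "smult (smult X Y) Z k x t = (\<Sum>i\<in>I. smult X Y i x t ** Z (k-i) x t)"
    unfolding I_def by (rule smult_eq_sum[OF smult_vanishes_below[OF X Y] Z])
  also have "\<dots> = (\<Sum>i\<in>I. \<Sum>j\<in>J. X j x t ** (Y (i-j) x t ** Z (k-i) x t))"
  proof (rule sum.cong[OF refl])
    fix i assume "i \<in> I"
    then have "smult X Y i x t = (\<Sum>j\<in>J. X j x t ** Y (i-j) x t)"
      by (intro smult_eq_sum_superset[OF X Y]) (auto simp: I_def J_def)
    then show "smult X Y i x t ** Z (k-i) x t = (\<Sum>j\<in>J. X j x t ** (Y (i-j) x t ** Z (k-i) x t))"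
      by (simp add: matrix_sum_rdistrib matrix_mul_assoc J_def)
  qed
  also have "\<dots> = (\<Sum>j\<in>J. \<Sum>i\<in>I. X j x t ** (Y (i-j) x t ** Z (k-i) x t))"
    by (rule sum.swap)
  also have "\<dots> = (\<Sum>j\<in>J. X j x t ** smult Y Z (k-j) x t)"
  proof (rule sum.cong[OF refl])
    fix j assume "j \<in> J"
    have "smult Y Z (k-j) x t = (\<Sum>l\<in>(\<lambda>i. i - j) ` I. Y l x t ** Z (k - j - l) x t)"
    proof (rule smult_eq_sum_superset[OF Y Z])
      show "{p..k - j - p} \<subseteq> (\<lambda>i. i - j) ` I"
      proof
        fix l assume "l \<in> {p..k-j-p}"
        then have "l + j \<in> I" "l = (l+j) - j" using \<open>j \<in> J\<close> by (auto simp: I_def J_def)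
        then show "l \<in> (\<lambda>i. i - j) ` I" by blast
      qed
    qed (simp add: I_def)
    also have "\<dots> = (\<Sum>i\<in>I. Y (i-j) x t ** Z (k - i) x t)"
      by (subst sum.reindex) (auto simp: inj_on_def)
    finally show "(\<Sum>i\<in>I. X j x t ** (Y (i-j) x t ** Z (k-i) x t)) = X j x t ** smult Y Z (k-j) x t"
      by (simp add: matrix_sum_ldistrib I_def)
  qed
  also have "\<dots> = smult X (smult Y Z) k x t"
    unfolding J_def using smult_eq_sum[OF X smult_vanishes_below[OF Y Z], of k x t]
    by (simp add: algebra_simps)
  finally show ?thesis .
qed

lemma smult_cancel_left:
  assumes "laurent T" "laurent Ti" "laurent X" "\<And>k. smult T Ti k x t = sone k x t"
  shows "smult T (smult Ti X) k x t = X k x t"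
proof -
  have "smult T (smult Ti X) k x t = smult (smult T Ti) X k x t"
    by (rule smult_assoc[OF assms(1-3), symmetric])
  also have "\<dots> = smult sone X k x t"
    by (rule smult_cong) (simp_all add: assms)
  also have "\<dots> = X k x t"
    by (rule smult_sone_left[OF assms(3)])
  finally show ?thesis .
qed


lemma smult_fun_eq_sum:
  "\<forall>k<p. X k = (\<lambda>_ _. 0) \<Longrightarrow> \<forall>k<q. Y k = (\<lambda>_ _. 0) \<Longrightarrow>
     smult X Y k = (\<lambda>x t. \<Sum>i\<in>{p..k-q}. X i x t ** Y (k-i) x t)"
  by (simp add: fun_eq_iff smult_eq_sum)

lemma ser_holo_on_add: "ser_holo_on \<Omega> X \<Longrightarrow> ser_holo_on \<Omega> Y \<Longrightarrow> ser_holo_on \<Omega> (X + Y)"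
  by (simp add: ser_holo_on_def plus_fun_def mholo_on_add)

lemma ser_holo_on_minus: "ser_holo_on \<Omega> X \<Longrightarrow> ser_holo_on \<Omega> (- X)"
  by (simp add: ser_holo_on_def fun_Compl_def mholo_on_minus)

lemma ser_holo_on_spartial: "open \<Omega> \<Longrightarrow> ser_holo_on \<Omega> X \<Longrightarrow> ser_holo_on \<Omega> (spartial d X)"
  by (simp add: ser_holo_on_def spartial_def mholo_on_mpartial)

lemma ser_holo_on_smult:
  assumes "ser_holo_on \<Omega> X" "ser_holo_on \<Omega> Y" "laurent X" "laurent Y"
  shows "ser_holo_on \<Omega> (smult X Y)"
proof -
  obtain p where "\<forall>k<p. X k = (\<lambda>_ _. 0)" "\<forall>k<p. Y k = (\<lambda>_ _. 0)"
    by (rule laurent_common_bound[OF assms(3,4,4)])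
  then show ?thesis
    using assms(1,2)
    by (auto simp: ser_holo_on_def smult_fun_eq_sum intro!: mholo_on_sum mholo_on_mult)
qed

lemma laurent_truncate: "laurent X \<Longrightarrow> laurent (\<lambda>k. if k \<le> n then X k else (\<lambda>_ _. 0))"
  unfolding laurent_def by auto

lemma ser_holo_on_truncate:
  "ser_holo_on \<Omega> X \<Longrightarrow> ser_holo_on \<Omega> (\<lambda>k. if k \<le> n then X k else (\<lambda>_ _. 0))"
  by (simp add: ser_holo_on_def mholo_on_const)

lemma spartial_add:
  "ser_holo_on \<Omega> X \<Longrightarrow> ser_holo_on \<Omega> Y \<Longrightarrow> (x, t) \<in> \<Omega> \<Longrightarrow>
     spartial d (X + Y) k x t = spartial d X k x t + spartial d Y k x t"
  by (simp add: ser_holo_on_def spartial_def plus_fun_def mpartial_add[of \<Omega>])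

lemma spartial_minus:
  "ser_holo_on \<Omega> X \<Longrightarrow> (x, t) \<in> \<Omega> \<Longrightarrow> spartial d (- X) k x t = - spartial d X k x t"
  by (simp add: ser_holo_on_def spartial_def fun_Compl_def mpartial_minus[of \<Omega>])

lemma spartial_smult:
  assumes "ser_holo_on \<Omega> X" "ser_holo_on \<Omega> Y" "laurent X" "laurent Y" "(x, t) \<in> \<Omega>"
  shows "spartial d (smult X Y) k x t = smult (spartial d X) Y k x t + smult X (spartial d Y) k x t"
proof -
  obtain p where X: "\<forall>k<p. X k = (\<lambda>_ _. 0)" and Y: "\<forall>k<p. Y k = (\<lambda>_ _. 0)"
    by (rule laurent_common_bound[OF assms(3,4,4)])
  have dX: "\<forall>k<p. spartial d X k = (\<lambda>_ _. 0)" and dY: "\<forall>k<p. spartial d Y k = (\<lambda>_ _. 0)"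
    using X Y by (simp_all add: spartial_def mpartial_const)
  have holo: "mholo_on \<Omega> (X i)" "mholo_on \<Omega> (Y i)" for i
    using assms(1,2) by (auto simp: ser_holo_on_def)
  have "spartial d (smult X Y) k x t = (\<Sum>i\<in>{p..k-p}. mpartial d (\<lambda>x t. X i x t ** Y (k-i) x t) x t)"
    unfolding spartial_def smult_fun_eq_sum[OF X Y]
    by (rule mpartial_sum[OF _ _ assms(5)]) (auto intro: mholo_on_mult holo)
  also have "\<dots> = (\<Sum>i\<in>{p..k-p}. mpartial d (X i) x t ** Y (k-i) x t + X i x t ** mpartial d (Y (k-i)) x t)"
    by (rule sum.cong[OF refl]) (rule mpartial_mult[OF holo assms(5)])
  also have "\<dots> = smult (spartial d X) Y k x t + smult X (spartial d Y) k x t"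
    by (simp add: sum.distrib smult_eq_sum[OF dX Y] smult_eq_sum[OF X dY] spartial_def)
  finally show ?thesis .
qed

lemma spartial_cong:
  "open \<Omega> \<Longrightarrow> (x, t) \<in> \<Omega> \<Longrightarrow> (\<And>k x t. (x, t) \<in> \<Omega> \<Longrightarrow> X k x t = Y k x t) \<Longrightarrow>
     spartial d X k x t = spartial d Y k x t"
  unfolding spartial_def by (rule mpartial_cong)

lemma spartial_commute:
  "open \<Omega> \<Longrightarrow> ser_holo_on \<Omega> X \<Longrightarrow> (x, t) \<in> \<Omega> \<Longrightarrow>
     spartial d (spartial e X) k x t = spartial e (spartial d X) k x t"
  unfolding spartial_def ser_holo_on_def by (rule mpartial_commute) auto

section \<open>Curvature and gauge transformations\<close>

definition curvature :: "'n::finite option \<Rightarrow> 'n ser \<Rightarrow> 'n option \<Rightarrow> 'n ser \<Rightarrow> 'n ser" where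
  "curvature d Q e R = spartial d R - spartial e Q + scomm Q R"

definition gauge :: "'n::finite option \<Rightarrow> 'n ser \<Rightarrow> 'n ser \<Rightarrow> 'n ser \<Rightarrow> 'n ser" where
  "gauge d T Ti Q = smult Ti (spartial d T + smult Q T)"

text \<open>\<^term>\<open>curvature d Q e R\<close> is the commutator [d_d + Q, d_e + R] as a multiplication operator
  (\<^const>\<open>conn_comm\<close> extended to the t-direction), and \<^term>\<open>gauge d T Ti Q\<close> is the potential of
  Ti (d_d + Q) T.\<close>

lemma scomm_eq_diff: "scomm X Y = smult X Y - smult Y X"
  by (simp add: fun_eq_iff scomm_def)

lemma laurent_scomm [simp]: "laurent X \<Longrightarrow> laurent Y \<Longrightarrow> laurent (scomm X Y)"
  by (simp add: scomm_eq_diff)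

lemma laurent_curvature [simp]: "laurent Q \<Longrightarrow> laurent R \<Longrightarrow> laurent (curvature d Q e R)"
  by (simp add: curvature_def)

lemma smult_curvature_left:
  assumes "laurent Q" "laurent R" "laurent T"
  shows "smult (curvature d Q e R) T k x t =
           smult (spartial d R) T k x t - smult (spartial e Q) T k x t
           + smult Q (smult R T) k x t - smult R (smult Q T) k x t"
  using assms
  by (simp add: curvature_def scomm_eq_diff smult_add_left smult_diff_left smult_assoc)

lemma smult_eq_0_left:
  assumes "laurent X" "laurent Y" "\<And>i. X i x t = 0"
  shows "smult X Y k x t = 0"
proof -
  obtain p where "\<forall>k<p. X k = (\<lambda>_ _. 0)" "\<forall>k<p. Y k = (\<lambda>_ _. 0)"
    by (rule laurent_common_bound[OF assms(1,2,2)])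
  then show ?thesis
    using assms(3) by (simp add: smult_eq_sum)
qed

lemma smult_eq_0_right:
  assumes "laurent X" "laurent Y" "\<And>i. Y i x t = 0"
  shows "smult X Y k x t = 0"
proof -
  obtain p where "\<forall>k<p. X k = (\<lambda>_ _. 0)" "\<forall>k<p. Y k = (\<lambda>_ _. 0)"
    by (rule laurent_common_bound[OF assms(1,2,2)])
  then show ?thesis
    using assms(3) by (simp add: smult_eq_sum)
qed

lemma curvature_cong:
  assumes "open \<Omega>" "(x, t) \<in> \<Omega>" "laurent Q" "laurent Q'" "laurent R" "laurent R'"
    and "\<And>k x t. (x, t) \<in> \<Omega> \<Longrightarrow> Q k x t = Q' k x t" "\<And>k x t. (x, t) \<in> \<Omega> \<Longrightarrow> R k x t = R' k x t"
  shows "curvature d Q e R k x t = curvature d Q' e R' k x t"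
  using assms
  by (simp add: curvature_def scomm_def spartial_cong[of \<Omega> x t R R'] spartial_cong[of \<Omega> x t Q Q']
                smult_cong[of Q Q' R R'] smult_cong[of R R' Q Q'])

lemma curvature_eq_0_if_lax:
  assumes "laurent A" "laurent P" "ser_holo_on \<Omega> P" "(x, t) \<in> \<Omega>"
    and lax: "spartial None A k x t = scomm P A k x t - spartial d P k x t"
  shows "curvature d A None (- P) k x t = 0"
  using assms
  by (simp add: curvature_def scomm_def spartial_minus smult_minus_left smult_minus_right)

locale invertible_series =
  fixes \<Omega> :: "((complex^'n::finite) \<times> complex) set" and T Ti :: "'n ser"
  assumes open_\<Omega>: "open \<Omega>"
    and laurent_T [simp]: "laurent T" and laurent_Ti [simp]: "laurent Ti"
    and holo_T: "ser_holo_on \<Omega> T" and holo_Ti: "ser_holo_on \<Omega> Ti"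
    and right_inverse: "\<And>k x t. (x, t) \<in> \<Omega> \<Longrightarrow> smult T Ti k x t = sone k x t"
    and left_inverse: "\<And>k x t. (x, t) \<in> \<Omega> \<Longrightarrow> smult Ti T k x t = sone k x t"
begin

lemma laurent_gauge [simp]: "laurent Q \<Longrightarrow> laurent (gauge d T Ti Q)"
  by (simp add: gauge_def)

lemma ser_holo_on_gauge: "ser_holo_on \<Omega> Q \<Longrightarrow> laurent Q \<Longrightarrow> ser_holo_on \<Omega> (gauge d T Ti Q)"
  unfolding gauge_def
  by (intro ser_holo_on_smult ser_holo_on_add ser_holo_on_spartial open_\<Omega> holo_T holo_Ti) simp_all

lemma smult_gauge:
  assumes "laurent Q" "(x, t) \<in> \<Omega>"
  shows "smult T (gauge d T Ti Q) k x t = spartial d T k x t + smult Q T k x t"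
  unfolding gauge_def using assms right_inverse by (subst smult_cancel_left) simp_all

lemma smult_spartial_gauge:
  assumes Q: "laurent Q" "ser_holo_on \<Omega> Q" and "(x, t) \<in> \<Omega>"
  shows "smult T (spartial e (gauge d T Ti Q)) k x t =
           spartial e (spartial d T) k x t + smult (spartial e Q) T k x t + smult Q (spartial e T) k x t
           - smult (spartial e T) (gauge d T Ti Q) k x t"
proof -
  note holo = holo_T ser_holo_on_gauge[OF Q(2,1)] ser_holo_on_spartial[OF open_\<Omega>]
  have "spartial e (smult T (gauge d T Ti Q)) k x t = spartial e (spartial d T + smult Q T) k x t"
    by (rule spartial_cong[OF open_\<Omega> \<open>(x, t) \<in> \<Omega>\<close>]) (simp add: smult_gauge[OF Q(1)])
  also have "\<dots> = spartial e (spartial d T) k x t + smult (spartial e Q) T k x t + smult Q (spartial e T) k x t"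
    using Q \<open>(x, t) \<in> \<Omega>\<close>
    by (simp add: spartial_add[of \<Omega>] spartial_smult[of \<Omega>] holo ser_holo_on_smult)
  finally show ?thesis
    using spartial_smult[OF holo(1,2) laurent_T laurent_gauge[OF Q(1)] \<open>(x, t) \<in> \<Omega>\<close>, where d=e and k=k]
    by (simp add: algebra_simps)
qed

lemma smult_gauge_gauge:
  assumes "laurent Q" "laurent R" "(x, t) \<in> \<Omega>"
  shows "smult T (smult (gauge d T Ti Q) (gauge e T Ti R)) k x t =
           smult (spartial d T) (gauge e T Ti R) k x t + smult Q (spartial e T) k x t
           + smult Q (smult R T) k x t"
proof -
  have "smult T (smult (gauge d T Ti Q) (gauge e T Ti R)) k x t
          = smult (smult T (gauge d T Ti Q)) (gauge e T Ti R) k x t"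
    using assms by (simp add: smult_assoc)
  also have "\<dots> = smult (spartial d T + smult Q T) (gauge e T Ti R) k x t"
    using assms by (intro smult_cong) (simp_all add: smult_gauge)
  also have "\<dots> = smult (spartial d T) (gauge e T Ti R) k x t + smult Q (smult T (gauge e T Ti R)) k x t"
    using assms by (simp add: smult_add_left smult_assoc)
  also have "smult Q (smult T (gauge e T Ti R)) k x t = smult Q (spartial e T + smult R T) k x t"
    using assms by (intro smult_cong) (simp_all add: smult_gauge)
  finally show ?thesis
    using assms by (simp add: smult_add_right add.assoc)
qed

theorem curvature_gauge:
  assumes Q: "laurent Q" "ser_holo_on \<Omega> Q" and R: "laurent R" "ser_holo_on \<Omega> R"
    and "(x, t) \<in> \<Omega>"
  shows "curvature d (gauge d T Ti Q) e (gauge e T Ti R) k x t =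
           smult (smult Ti (curvature d Q e R)) T k x t"
proof -
  let ?Q' = "gauge d T Ti Q" and ?R' = "gauge e T Ti R"
  have intertwined: "smult T (curvature d ?Q' e ?R') k x t = smult (curvature d Q e R) T k x t"
    if "(x, t) \<in> \<Omega>" for k x t
  proof -
    have "smult T (curvature d ?Q' e ?R') k x t =
            smult T (spartial d ?R') k x t - smult T (spartial e ?Q') k x t
            + smult T (smult ?Q' ?R') k x t - smult T (smult ?R' ?Q') k x t"
      using Q R by (simp add: curvature_def scomm_eq_diff smult_add_right smult_diff_right)
    also have "\<dots> = smult (curvature d Q e R) T k x t"
      using smult_spartial_gauge[OF Q that, where e=e and d=d] smult_spartial_gauge[OF R that, where e=d and d=e]
        smult_gauge_gauge[OF Q(1) R(1) that, of d e] smult_gauge_gauge[OF R(1) Q(1) that, of e d]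
        spartial_commute[OF open_\<Omega> holo_T that, of d e] smult_curvature_left[OF Q(1) R(1) laurent_T]
      by (simp add: algebra_simps)
    finally show ?thesis .
  qed
  have "curvature d ?Q' e ?R' k x t = smult Ti (smult T (curvature d ?Q' e ?R')) k x t"
    using Q R left_inverse \<open>(x, t) \<in> \<Omega>\<close> by (simp add: smult_cancel_left)
  also have "\<dots> = smult Ti (smult (curvature d Q e R) T) k x t"
    by (rule smult_cong) (use Q R \<open>(x, t) \<in> \<Omega>\<close> in \<open>simp_all add: intertwined\<close>)
  also have "\<dots> = smult (smult Ti (curvature d Q e R)) T k x t"
    using Q R by (simp add: smult_assoc)
  finally show ?thesis .
qed

lemma gauge_eq:
  "laurent Q \<Longrightarrow> gauge d T Ti Q k x t = smult Ti (spartial d T) k x t + smult (smult Ti Q) T k x t"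
  by (simp add: gauge_def smult_add_right smult_assoc)

lemma curvature_gauge_eq_0:
  assumes "laurent Q" "ser_holo_on \<Omega> Q" "laurent R" "ser_holo_on \<Omega> R" "(x, t) \<in> \<Omega>"
    and flat: "\<And>k. curvature d Q e R k x t = 0"
  shows "curvature d (gauge d T Ti Q) e (gauge e T Ti R) k x t = 0"
  using assms by (simp add: curvature_gauge smult_eq_0_left smult_eq_0_right)

end

section \<open>Flat connections with diagonal potentials\<close>

lemma diag_mat_mult_right_entry:
  assumes "diag_mat (H :: complex^'n^'n)"
  shows "(M ** H) $ i $ j = M $ i $ j * H $ j $ j"
proof -
  have "(M ** H) $ i $ j = (\<Sum>l\<in>UNIV. if l = j then M $ i $ j * H $ j $ j else 0)"
    unfolding matrix_matrix_mult_def vec_lambda_beta by (rule sum.cong) (use assms in \<open>auto simp: diag_mat_def\<close>)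
  then show ?thesis by simp
qed

lemma diag_mat_mult_left_entry:
  assumes "diag_mat (H :: complex^'n^'n)"
  shows "(H ** M) $ i $ j = H $ i $ i * M $ i $ j"
proof -
  have "(H ** M) $ i $ j = (\<Sum>l\<in>UNIV. if l = i then H $ i $ i * M $ i $ j else 0)"
    unfolding matrix_matrix_mult_def vec_lambda_beta by (rule sum.cong) (use assms in \<open>auto simp: diag_mat_def\<close>)
  then show ?thesis by simp
qed

lemma diag_mat_commute:
  fixes A B :: "complex^'n^'n"
  assumes "diag_mat A" "diag_mat B"
  shows "A ** B = B ** A"
proof -
  have "(A ** B) $ i $ j = (B ** A) $ i $ j" for i j
    using diag_mat_mult_right_entry[OF assms(2), of A i j] diag_mat_mult_right_entry[OF assms(1), of B i j] assms
    by (cases "i = j") (auto simp: diag_mat_def)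
  then show ?thesis
    by (simp add: vec_eq_iff)
qed

lemma diag_commutator_entry:
  fixes H M :: "complex^'n^'n"
  assumes "diag_mat H"
  shows "(H ** M - M ** H) $ i $ j = M $ i $ j * (H $ i $ i - H $ j $ j)"
  using assms by (simp add: diag_mat_mult_right_entry diag_mat_mult_left_entry algebra_simps)

lemma scomm_eq_sum:
  assumes X: "\<forall>k<p. X k = (\<lambda>_ _. 0)" and Y: "\<forall>k<q. Y k = (\<lambda>_ _. 0)"
  shows "scomm X Y k x t = (\<Sum>i\<in>{p..k-q}. X i x t ** Y (k-i) x t - Y (k-i) x t ** X i x t)"
proof -
  have "smult Y X k x t = (\<Sum>l\<in>(\<lambda>i. k - i) ` {p..k-q}. Y l x t ** X (k-l) x t)"
  proof (rule smult_eq_sum_superset[OF Y X])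
    show "{q..k-p} \<subseteq> (\<lambda>i. k - i) ` {p..k-q}"
    proof
      fix l assume "l \<in> {q..k-p}"
      then have "k - l \<in> {p..k-q}" "l = k - (k - l)" by auto
      then show "l \<in> (\<lambda>i. k - i) ` {p..k-q}" by blast
    qed
  qed simp
  also have "\<dots> = (\<Sum>i\<in>{p..k-q}. Y (k-i) x t ** X i x t)"
    by (subst sum.reindex) (auto simp: inj_on_def)
  finally show ?thesis
    by (simp add: scomm_def smult_eq_sum[OF X Y] sum_subtractf)
qed

lemma scomm_diag_eq_0:
  assumes "laurent X" "laurent Y" "\<And>i. diag_mat (X i x t)" "\<And>i. diag_mat (Y i x t)"
  shows "scomm X Y k x t = 0"
proof -
  obtain p where "\<forall>k<p. X k = (\<lambda>_ _. 0)" "\<forall>k<p. Y k = (\<lambda>_ _. 0)"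
    by (rule laurent_common_bound[OF assms(1,2,2)])
  then show ?thesis
    using assms(3,4) by (simp add: scomm_eq_sum[of p _ p] diag_mat_commute)
qed

lemma entry_eq_0_if_annihilated:
  fixes H :: "'a::finite \<Rightarrow> complex^'n^'n"
  assumes span: "\<forall>D. diag_mat D \<longrightarrow> (\<exists>c. D = (\<Sum>a\<in>UNIV. cscale (c a) (H a)))"
    and "i \<noteq> j" and annihilated: "\<And>a. z * (H a $ i $ i - H a $ j $ j) = 0"
  shows "z = 0"
proof -
  define E :: "complex^'n^'n" where "E = (\<chi> r s. if r = i \<and> s = i then 1 else 0)"
  have "diag_mat E" by (simp add: E_def diag_mat_def)
  then obtain c where c: "E = (\<Sum>a\<in>UNIV. cscale (c a) (H a))"
    using span by blast
  have "1 = E $ i $ i - E $ j $ j"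
    using \<open>i \<noteq> j\<close> by (simp add: E_def)
  also have "\<dots> = (\<Sum>a\<in>UNIV. c a * (H a $ i $ i - H a $ j $ j))"
    by (simp add: c sum_component cscale_def sum_subtractf algebra_simps)
  finally have one: "1 = (\<Sum>a\<in>UNIV. c a * (H a $ i $ i - H a $ j $ j))" .
  have "z = z * 1"
    by simp
  also have "\<dots> = (\<Sum>a\<in>UNIV. c a * (z * (H a $ i $ i - H a $ j $ j)))"
    by (subst one) (simp add: sum_distrib_left algebra_simps)
  also have "\<dots> = 0"
    by (simp add: annihilated)
  finally show "z = 0" .
qed

lemma offdiag_entry_eq_0_if_flat:
  fixes H :: "'n::finite \<Rightarrow> 'n ser" and M :: "'n ser"
  assumes "open \<Omega>" and "(x, t) \<in> \<Omega>"
    and M_low: "\<forall>k<N. M k = (\<lambda>_ _. 0)" and "N \<le> m"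
    and M_diag: "\<And>l x t. l < m \<Longrightarrow> (x, t) \<in> \<Omega> \<Longrightarrow> diag_mat (M l x t)"
    and H_low: "\<forall>k < -1. H a k = (\<lambda>_ _. 0)"
    and H_diag: "\<And>k x t. (x, t) \<in> \<Omega> \<Longrightarrow> diag_mat (H a k x t)"
    and flat: "curvature (Some a) (H a) None M (m - 1) x t = 0"
    and "i \<noteq> j"
  shows "M m x t $ i $ j * (H a (-1) x t $ i $ i - H a (-1) x t $ j $ j) = 0"
proof -
  let ?term = "\<lambda>l. H a l x t ** M (m - 1 - l) x t - M (m - 1 - l) x t ** H a l x t"
  \<comment> \<open>off the diagonal only the commutator with \<open>H a (-1)\<close> survives\<close>
  have "spartial (Some a) M (m - 1) x t $ i $ j = 0" "spartial None (H a) (m - 1) x t $ i $ j = 0"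
    using diag_mat_mpartial[OF \<open>open \<Omega>\<close> \<open>(x, t) \<in> \<Omega>\<close>] M_diag H_diag \<open>i \<noteq> j\<close>
    by (auto simp: spartial_def diag_mat_def)
  moreover have "curvature (Some a) (H a) None M (m - 1) x t $ i $ j = 0"
    using flat by simp
  ultimately have "scomm (H a) M (m - 1) x t $ i $ j = 0"
    by (simp add: curvature_def)
  moreover have "scomm (H a) M (m - 1) x t = ?term (-1)"
  proof -
    have "{-1..m-1-N} = insert (-1) {0..m-1-N}"
      using \<open>N \<le> m\<close> by auto
    moreover have "?term l = 0" if "l \<in> {0..m-1-N}" for l
      using that \<open>(x, t) \<in> \<Omega>\<close> by (simp add: diag_mat_commute M_diag H_diag)
    ultimately show ?thesis
      by (simp add: scomm_eq_sum[OF H_low M_low])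
  qed
  moreover have "?term (-1) $ i $ j = M m x t $ i $ j * (H a (-1) x t $ i $ i - H a (-1) x t $ j $ j)"
    using diag_commutator_entry[OF H_diag[OF \<open>(x, t) \<in> \<Omega>\<close>]] by simp
  ultimately show ?thesis
    by simp
qed

lemma diag_mat_if_flat:
  fixes H :: "'n::finite \<Rightarrow> 'n ser" and M :: "'n ser"
  assumes "open \<Omega>"
    and M_low: "\<forall>k<N. M k = (\<lambda>_ _. 0)"
    and H_low: "\<And>a. \<forall>k < -1. H a k = (\<lambda>_ _. 0)"
    and H_diag: "\<And>a k x t. (x, t) \<in> \<Omega> \<Longrightarrow> diag_mat (H a k x t)"
    and H_span: "\<And>x t. (x, t) \<in> \<Omega> \<Longrightarrow>
                   \<forall>D. diag_mat D \<longrightarrow> (\<exists>c. D = (\<Sum>a\<in>UNIV. cscale (c a) (H a (-1) x t)))"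
    and flat: "\<And>a k x t. (x, t) \<in> \<Omega> \<Longrightarrow> curvature (Some a) (H a) None M k x t = 0"
    and "(x, t) \<in> \<Omega>"
  shows "diag_mat (M k x t)"
  using \<open>(x, t) \<in> \<Omega>\<close>
proof (induction k arbitrary: x t rule: measure_induct_rule[where f="\<lambda>k. nat (k - N)"])
  case (less m)
  show ?case
  proof (cases "m < N")
    case True
    then show ?thesis
      using M_low by (simp add: diag_mat_def)
  next
    case False
    then have "N \<le> m" by simp
    have IH: "diag_mat (M l x t)" if "l < m" "(x, t) \<in> \<Omega>" for l x t
      using less.IH[OF _ that(2), of l] M_low that(1) \<open>N \<le> m\<close>
      by (cases "l < N") (auto simp: diag_mat_def)
    have "M m x t $ i $ j = 0" if "i \<noteq> j" for i j
      by (rule entry_eq_0_if_annihilated[OF H_span[OF less.prems] that])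
         (rule offdiag_entry_eq_0_if_flat[OF \<open>open \<Omega>\<close> less.prems M_low \<open>N \<le> m\<close> IH
                H_low H_diag flat[OF less.prems] that])
    then show ?thesis
      by (simp add: diag_mat_def)
  qed
qed

lemma conservation_laws_if_flat:
  fixes H :: "'n::finite \<Rightarrow> 'n ser" and M :: "'n ser"
  assumes "open \<Omega>" "laurent M" "ser_holo_on \<Omega> M"
    and H_low: "\<forall>a k. k < -1 \<longrightarrow> H a k = (\<lambda>_ _. 0)"
    and H_diag: "\<forall>a k. \<forall>(x, t)\<in>\<Omega>. diag_mat (H a k x t)"
    and H_span: "\<forall>(x, t)\<in>\<Omega>. \<forall>D. diag_mat D \<longrightarrow> (\<exists>c. D = (\<Sum>a\<in>UNIV. cscale (c a) (H a (-1) x t)))"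
    and flat: "\<And>a k x t. (x, t) \<in> \<Omega> \<Longrightarrow> curvature (Some a) (H a) None M k x t = 0"
  shows "\<forall>k. \<exists>B :: 'n mfun. mholo_on \<Omega> B \<and> (\<forall>(x, t)\<in>\<Omega>. diag_mat (B x t)) \<and>
           (\<forall>a. \<forall>(x, t)\<in>\<Omega>. pt (H a k) x t + px a B x t = 0)"
proof (rule allI, intro exI conjI)
  fix k
  obtain N where "\<forall>k<N. M k = (\<lambda>_ _. 0)"
    using \<open>laurent M\<close> by (auto simp: laurent_def)
  note H_diag_at = H_diag[unfolded Ball_def split_paired_All prod.case, rule_format]
  have M_diag: "diag_mat (M k x t)" if "(x, t) \<in> \<Omega>" for k x t
    by (rule diag_mat_if_flat[OF \<open>open \<Omega>\<close> \<open>\<forall>k<N. M k = (\<lambda>_ _. 0)\<close> _ H_diag_at _ flat that])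
       (use H_low H_span[unfolded Ball_def split_paired_All] in auto)
  have H: "laurent (H a)" for a
    using H_low by (auto simp: laurent_def)
  have M_k: "mholo_on \<Omega> (M k)"
    using \<open>ser_holo_on \<Omega> M\<close> by (simp add: ser_holo_on_def)
  show "mholo_on \<Omega> (\<lambda>x t. - M k x t)"
    by (rule mholo_on_minus[OF M_k])
  show "\<forall>(x, t)\<in>\<Omega>. diag_mat (- M k x t)"
    using M_diag by (auto simp: diag_mat_def)
  have "pt (H a k) x t + px a (\<lambda>x t. - M k x t) x t = 0" if "(x, t) \<in> \<Omega>" for a x t
  proof -
    have "scomm (H a) M k x t = 0"
      using H \<open>laurent M\<close> M_diag H_diag_at that by (intro scomm_diag_eq_0)
    then show ?thesis
      using flat[OF that, of a k] mpartial_minus[OF M_k that]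
      by (simp add: curvature_def pt_eq_mpartial px_eq_mpartial spartial_def)
  qed
  then show "\<forall>a. \<forall>(x, t)\<in>\<Omega>. pt (H a k) x t + px a (\<lambda>x t. - M k x t) x t = 0"
    by auto
qed

theorem mainTheorem8:
  fixes \<Omega> :: "((complex^'n) \<times> complex) set"
    and C :: "'n \<Rightarrow> 'n mfun"
    and b :: "int \<Rightarrow> complex^'n^'n"
    and T Ti :: "'n ser"
    and h :: "'n \<Rightarrow> 'n ser"
  defines "A \<equiv> \<lambda>a k. if k = -1 then (\<lambda>x t. - C a x t) else (\<lambda>x t. 0)"
    and "P \<equiv> \<lambda>k. if k \<le> -1 then smult (smult T (\<lambda>j x t. b j)) Ti k else (\<lambda>x t. 0)"
  assumes Omega: "open \<Omega>"
    and C_holo: "\<forall>a. mholo_on \<Omega> (C a)"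
    and commute: "\<forall>a c k. \<forall>(x,t)\<in>\<Omega>. conn_comm a (A a) c (A c) k x t = 0"
    and b_diag: "\<forall>k. diag_mat (b k)"
    and b_poly: "\<forall>k>0. b k = 0" "\<exists>N. \<forall>k<N. b k = 0"
    and evolution: "\<forall>a k. \<forall>(x,t)\<in>\<Omega>. spt (A a) k x t = scomm P (A a) k x t - spx a P k x t"
    and T_pow: "\<forall>k<0. T k = (\<lambda>_ _. 0)" "\<forall>k<0. Ti k = (\<lambda>_ _. 0)"
    and T_holo: "\<forall>k. mholo_on \<Omega> (T k)" "\<forall>k. mholo_on \<Omega> (Ti k)"
    and T_inv: "\<forall>k. \<forall>(x,t)\<in>\<Omega>. smult T Ti k x t = sone k x t"
               "\<forall>k. \<forall>(x,t)\<in>\<Omega>. smult Ti T k x t = sone k x t"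
    and dressing: "\<forall>a k. \<forall>(x,t)\<in>\<Omega>.
                     smult Ti (spx a T) k x t + smult (smult Ti (A a)) T k x t = h a k x t"
    and h_low: "\<forall>a k. k < -1 \<longrightarrow> h a k = (\<lambda>_ _. 0)"
    and h_diag: "\<forall>a k. \<forall>(x,t)\<in>\<Omega>. diag_mat (h a k x t)"
    and h_span: "\<forall>(x,t)\<in>\<Omega>. \<forall>D. diag_mat D \<longrightarrow>
                   (\<exists>c. D = (\<Sum>a\<in>UNIV. cscale (c a) (h a (-1) x t)))"
  shows "\<forall>k. \<exists>B :: 'n mfun. mholo_on \<Omega> B \<and> (\<forall>(x,t)\<in>\<Omega>. diag_mat (B x t)) \<and>
           (\<forall>a. \<forall>(x,t)\<in>\<Omega>. pt (h a k) x t + px a B x t = 0)"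
proof -
  interpret invertible_series \<Omega> T Ti
    using Omega T_pow T_holo T_inv by unfold_locales (auto simp: laurent_def ser_holo_on_def)
  obtain N where "\<forall>k<N. b k = 0"
    using b_poly(2) by blast
  then have "laurent (\<lambda>j x t. b j)" "ser_holo_on \<Omega> (\<lambda>j x t. b j)"
    by (auto simp: laurent_def ser_holo_on_def mholo_on_const)
  then have P: "laurent P" "ser_holo_on \<Omega> P"
    unfolding P_def by (simp_all add: laurent_truncate ser_holo_on_truncate ser_holo_on_smult holo_T holo_Ti)
  have A: "laurent (A a)" "ser_holo_on \<Omega> (A a)" for a
    using C_holo by (auto simp: laurent_def ser_holo_on_def A_def mholo_on_const mholo_on_minus)
  have h: "laurent (h a)" for a
    using h_low by (auto simp: laurent_def)
  define M where "M = gauge None T Ti (- P)"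
  have M: "laurent M" "ser_holo_on \<Omega> M"
    using P by (simp_all add: M_def ser_holo_on_gauge ser_holo_on_minus)
  have flat: "curvature (Some a) (h a) None M k x t = 0" if "(x, t) \<in> \<Omega>" for a k x t
  proof -
    have "curvature (Some a) (h a) None M k x t = curvature (Some a) (gauge (Some a) T Ti (A a)) None M k x t"
      using A h M dressing[unfolded Ball_def split_paired_All]
      by (intro curvature_cong[OF open_\<Omega> that]) (auto simp: gauge_eq spx_eq_spartial)
    also have "\<dots> = 0"
      unfolding M_def using A P evolution[unfolded Ball_def split_paired_All] that
      by (intro curvature_gauge_eq_0 curvature_eq_0_if_lax)
         (auto simp: ser_holo_on_minus spx_eq_spartial spt_eq_spartial)
    finally show ?thesis .
  qed
  show ?thesis
    using open_\<Omega> M h_low h_diag h_span flat by (rule conservation_laws_if_flat)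
qed

end
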